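(* Consider the fixed-design linear regression model with $n$ observations, $p$ parameters, squared error loss, and let $\theta=\sum_{i=1}^n h_{ii}^2\in[0,p]$, where $h_{ii}$ are the diagonal entries of the hat matrix $H=X(X^TX)^{-1}X^T$ (with $X$ of rank $p$). (a) Under normality of the errors: (i) in random cross validation, the minimizer of $g(n_1)=\sigma^4\Big\{\frac{2}{n-n_1}+\frac{4p+3\theta}{n_1(n-n_1)}\Big\}$ over integers $n_1$ with $n/2\le n_1\le n-1$ is $n_1^{\rm opt}=\lceil n/2\rceil$; (ii) in $k$-fold cross validation, the minimizer of $V_k=\frac1k\mathsf{v}_k+\frac{k-1}{k}\mathsf{c}_k$ over divisors $k\ge2$ of $n$ is $k^{\rm opt}=n$ (leave-one-out cross validation), where $\mathsf{v}_k=\sigma^4\Big\{\frac{2k}{n}+\frac{4k^2p}{(k-1)n^2}+\frac{3k^2\theta}{(k-1)n^2}+\frac{pk^3}{(k-1)^2n^2}\Big\}$ and $\mathsf{c}_k=\sigma^4\Big\{\frac{2k^4(p-\theta)}{(k-1)^4n(n-1)}-\frac{k^2\theta}{(k-1)^2n(n-1)}\Big\}$. (b) For a general error distribution with $\mathbb{E}(|\varepsilon_i|^{4+\epsilon})<\infty$ for some $\epsilon>0$, in random cross validation the minimizer of $g(n_1)=\frac{\mu_4-\sigma^4}{n-n_1}+\frac{(4p+3\theta)\sigma^4}{n_1(n-n_1)}$, with $\mu_4=\mathbb{E}(\varepsilon_i^4)$, over integers $n_1$ with $n/2\le n_1\le n-1$ is $n_1^{\rm opt}=\lceil n/2\rc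eil$.
   Context: Model: $\mathbf y=X\boldsymbol\beta+\boldsymbol\varepsilon$, with $X\in\mathbb{R}^{n\times p}$ the (fixed) design matrix whose first column is all ones, errors i.i.d. with mean $0$ and variance $\sigma^2$ (nondegenerate). A decision rule is fitted by ordinary least squares on a training set of $n_1$ observations and evaluated on the remaining $n_2=n-n_1$ with squared error loss; $\hat\mu_j$ is the average test set error. The optimal training size is defined as the minimizer of the variance of $\hat\mu_j$ over $n_1\ge n/2$; the paper approximates this variance (neglecting $O(n^{-2})$ terms) by the function $g(n_1)$ given in the claim. For $k$-fold cross validation ($n_1=(k-1)n/k$), $\mathsf{v}_k$ and $\mathsf{c}_k$ are the paper's approximations (neglecting $o(n^{-2})$ terms) of $\operatorname{Var}(\hat\mu_j)$ and $\operatorname{Cov}(\hat\mu_j,\hat\mu_{j'})$, and $V_k$ is the resulting approximation of the variance of the $k$-fold estimator; the optimal $k$ is its minimizer. *)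

theory Defs
  imports "HOL-Analysis.Analysis" "HOL-Probability.Probability"
begin

definition hat_matrix :: "real^'p^'n \<Rightarrow> real^'n^'n" where
  "hat_matrix X = X ** matrix_inv (transpose X ** X) ** transpose X"

definition theta :: "real^'p^'n \<Rightarrow> real" where
  "theta X = (\<Sum>i\<in>UNIV. (hat_matrix X $ i $ i)^2)"

definition g_normal :: "nat \<Rightarrow> nat \<Rightarrow> real \<Rightarrow> real \<Rightarrow> nat \<Rightarrow> real" where
  "g_normal n p \<theta> \<sigma> n1 = \<sigma>^4 * (2 / (real n - real n1)
      + (4 * real p + 3 * \<theta>) / (real n1 * (real n - real n1)))"

definition g_general :: "nat \<Rightarrow> nat \<Rightarrow> real \<Rightarrow> real \<Rightarrow> real \<Rightarrow> nat \<Rightarrow> real" where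
  "g_general n p \<theta> \<sigma> \<mu>4 n1 = (\<mu>4 - \<sigma>^4) / (real n - real n1)
      + (4 * real p + 3 * \<theta>) * \<sigma>^4 / (real n1 * (real n - real n1))"

definition v_k :: "nat \<Rightarrow> nat \<Rightarrow> real \<Rightarrow> real \<Rightarrow> nat \<Rightarrow> real" where
  "v_k n p \<theta> \<sigma> k = \<sigma>^4 * (2 * real k / real n
      + 4 * (real k)^2 * real p / ((real k - 1) * (real n)^2)
      + 3 * (real k)^2 * \<theta> / ((real k - 1) * (real n)^2)
      + real p * (real k)^3 / ((real k - 1)^2 * (real n)^2))"

definition c_k :: "nat \<Rightarrow> nat \<Rightarrow> real \<Rightarrow> real \<Rightarrow> nat \<Rightarrow> real" where
  "c_k n p \<theta> \<sigma> k = \<sigma>^4 * (2 * (real k)^4 * (real p - \<theta>) / ((real k - 1)^4 * real n * (real n - 1))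
      - (real k)^2 * \<theta> / ((real k - 1)^2 * real n * (real n - 1)))"

definition V_k :: "nat \<Rightarrow> nat \<Rightarrow> real \<Rightarrow> real \<Rightarrow> nat \<Rightarrow> real" where
  "V_k n p \<theta> \<sigma> k = (1 / real k) * v_k n p \<theta> \<sigma> k + ((real k - 1) / real k) * c_k n p \<theta> \<sigma> k"

definition unique_argmin :: "('a \<Rightarrow> real) \<Rightarrow> ('a \<Rightarrow> bool) \<Rightarrow> 'a \<Rightarrow> bool" where
  "unique_argmin f P x \<longleftrightarrow> P x \<and> (\<forall>y. P y \<and> y \<noteq> x \<longrightarrow> f x < f y)"

end

theory Submission
  imports Defs
begin

text \<open>
  The hat matrix H is symmetric, idempotent and of trace p, so each diagonal entry satisfies
  h_ii = \<Sum>_j h_ij^2 \<ge> h_ii^2; hence 0 \<le> \<theta> \<le> p.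
  Both versions of g have the shape a/(n - n1) + b/(n1 (n - n1)) with a = \<mu>4 - \<sigma>^4 \<ge> 0
  (the variance of \<epsilon>^2) and b = (4p + 3\<theta>)\<sigma>^4 > 0. On n/2 \<le> n1 < n
  both n - n1 and n1 (n - n1) decrease, so g is strictly increasing there and the smallest
  admissible n1 wins. Finally V_k = \<sigma>^4 (2/n + b u + c u^2 + d u^3) with u = k/(k - 1),
  b > 0 and c, d \<ge> 0 (this is where \<theta> \<le> p enters); u decreases in k, so the largest
  divisor k = n wins.
\<close>

lemma matrix_inv_right:
  fixes A :: "'a::semiring_1^'n^'n"
  assumes "invertible A"
  shows "A ** matrix_inv A = mat 1"
  using someI_ex[OF assms[unfolded invertible_def]] by (simp add: matrix_inv_def)

lemma matrix_inv_left:
  fixes A :: "'a::semiring_1^'n^'n"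
  assumes "invertible A"
  shows "matrix_inv A ** A = mat 1"
  using someI_ex[OF assms[unfolded invertible_def]] by (simp add: matrix_inv_def)

lemma transpose_matrix_inv_symmetric:
  fixes A :: "'a::comm_semiring_1^'n^'n"
  assumes "invertible A" and "transpose A = A"
  shows "transpose (matrix_inv A) = matrix_inv A"
proof -
  have "transpose (matrix_inv A) ** A = mat 1"
    using arg_cong[OF matrix_inv_right[OF assms(1)], of transpose]
    by (simp add: matrix_transpose_mul assms(2))
  then show ?thesis
    by (metis matrix_inv_right[OF assms(1)] matrix_mul_assoc matrix_mul_lid matrix_mul_rid)
qed

lemma invertible_transpose_mult_self:
  fixes X :: "real^'p^'n"
  assumes "rank X = CARD('p)"
  shows "invertible (transpose X ** X)"
proof -
  have inj: "inj ((*v) X)"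
    using assms full_rank_injective by blast
  have "x = 0" if "(transpose X ** X) *v x = 0" for x
  proof -
    from that have "(X *v x) v* X = 0"
      by (simp add: matrix_vector_mul_assoc[symmetric])
    then have "inner (X *v x) (X *v x) = 0"
      by (metis dot_lmul_matrix inner_zero_left)
    then show "x = 0"
      using inj by (simp add: inj_on_def)
  qed
  then obtain B where "B ** (transpose X ** X) = mat 1"
    using matrix_left_invertible_ker by blast
  then show ?thesis
    using invertible_left_inverse by blast
qed

lemma hat_matrix_symmetric:
  fixes X :: "real^'p^'n"
  assumes "rank X = CARD('p)"
  shows "transpose (hat_matrix X) = hat_matrix X"
  using transpose_matrix_inv_symmetric[OF invertible_transpose_mult_self[OF assms]]
  by (simp add: hat_matrix_def matrix_transpose_mul matrix_mul_assoc)

lemma hat_matrix_idempotent: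
  fixes X :: "real^'p^'n"
  assumes "rank X = CARD('p)"
  shows "hat_matrix X ** hat_matrix X = hat_matrix X"
proof -
  define Ai where "Ai = matrix_inv (transpose X ** X)"
  have "hat_matrix X ** hat_matrix X = X ** (Ai ** (transpose X ** X)) ** Ai ** transpose X"
    by (simp add: hat_matrix_def Ai_def matrix_mul_assoc)
  also have "\<dots> = hat_matrix X"
    using matrix_inv_left[OF invertible_transpose_mult_self[OF assms]]
    by (simp add: hat_matrix_def Ai_def)
  finally show ?thesis .
qed

lemma trace_hat_matrix:
  fixes X :: "real^'p^'n"
  assumes "rank X = CARD('p)"
  shows "trace (hat_matrix X) = real CARD('p)"
proof -
  define Ai where "Ai = matrix_inv (transpose X ** X)"
  have "trace (hat_matrix X) = trace (X ** (Ai ** transpose X))"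
    by (simp add: hat_matrix_def Ai_def matrix_mul_assoc)
  also have "\<dots> = trace (Ai ** transpose X ** X)"
    by (rule trace_mul_sym)
  also have "\<dots> = real CARD('p)"
    using matrix_inv_left[OF invertible_transpose_mult_self[OF assms]]
    by (simp add: Ai_def trace_I matrix_mul_assoc)
  finally show ?thesis .
qed

lemma symmetric_idempotent_diag_square_le:
  fixes H :: "real^'n^'n"
  assumes "transpose H = H" and "H ** H = H"
  shows "(H $ i $ i)^2 \<le> H $ i $ i"
proof -
  have "H $ i $ i = (H ** H) $ i $ i"
    using assms(2) by simp
  also have "\<dots> = (\<Sum>j\<in>UNIV. H $ i $ j * transpose H $ i $ j)"
    by (simp add: matrix_matrix_mult_def transpose_def)
  also have "\<dots> = (\<Sum>j\<in>UNIV. (H $ i $ j)^2)"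
    using assms(1) by (simp add: power2_eq_square)
  finally show ?thesis
    using member_le_sum[of i UNIV "\<lambda>j. (H $ i $ j)^2"] by simp
qed

lemma theta_nonneg: "0 \<le> theta X"
  unfolding theta_def by (simp add: sum_nonneg)

lemma theta_le_card:
  fixes X :: "real^'p^'n"
  assumes "rank X = CARD('p)"
  shows "theta X \<le> real CARD('p)"
proof -
  have "theta X \<le> (\<Sum>i\<in>UNIV. hat_matrix X $ i $ i)"
    unfolding theta_def using hat_matrix_symmetric[OF assms] hat_matrix_idempotent[OF assms]
    by (intro sum_mono symmetric_idempotent_diag_square_le)
  also have "\<dots> = real CARD('p)"
    using trace_hat_matrix[OF assms] by (simp add: trace_def)
  finally show ?thesis .
qed

lemma less_sum_inverse_upper_half:
  fixes a b n x y :: real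
  assumes "0 \<le> a" "0 < b" "n / 2 \<le> x" "x < y" "y < n"
  shows "a / (n - x) + b / (x * (n - x)) < a / (n - y) + b / (y * (n - y))"
proof -
  have "x * (n - x) - y * (n - y) = (y - x) * (x + y - n)"
    by (simp add: algebra_simps)
  also have "\<dots> > 0"
    using assms by (intro mult_pos_pos) auto
  finally have "y * (n - y) < x * (n - x)"
    by simp
  moreover have "0 < y * (n - y)"
    using assms by (intro mult_pos_pos) auto
  ultimately have "b / (x * (n - x)) < b / (y * (n - y))"
    using assms(2) by (intro divide_strict_left_mono) auto
  moreover have "a / (n - x) \<le> a / (n - y)"
    using assms by (intro divide_left_mono) auto
  ultimately show ?thesis
    by linarith
qed

lemma unique_argmin_ceiling_half:
  fixes f :: "nat \<Rightarrow> real"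
  assumes "2 \<le> n"
    and increasing: "\<And>m m'. real n / 2 \<le> real m \<Longrightarrow> m < m' \<Longrightarrow> m' \<le> n - 1 \<Longrightarrow> f m < f m'"
  shows "unique_argmin f (\<lambda>n1. real n / 2 \<le> real n1 \<and> n1 \<le> n - 1) (nat \<lceil>real n / 2\<rceil>)"
proof -
  have "nat \<lceil>real n / 2\<rceil> \<le> m" if "real n / 2 \<le> real m" for m
    using that by (simp add: ceiling_le nat_le_iff)
  moreover have "real n / 2 \<le> real (nat \<lceil>real n / 2\<rceil>)" "nat \<lceil>real n / 2\<rceil> \<le> n - 1"
    using \<open>2 \<le> n\<close> by linarith+
  ultimately show ?thesis
    unfolding unique_argmin_def using increasing by (metis le_neq_implies_less)
qed

text \<open>3\<sigma>^4 is the fourth moment of N(0, \<sigma>^2).\<close>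

lemma g_normal_eq_g_general: "g_normal n p \<theta> \<sigma> = g_general n p \<theta> \<sigma> (3 * \<sigma>^4)"
  by (simp add: fun_eq_iff g_normal_def g_general_def algebra_simps add_divide_distrib)

lemma unique_argmin_g_general:
  assumes "2 \<le> n" "\<sigma> \<noteq> 0" "\<sigma>^4 \<le> \<mu>4" "0 < 4 * real p + 3 * \<theta>"
  shows "unique_argmin (g_general n p \<theta> \<sigma> \<mu>4)
    (\<lambda>n1. real n / 2 \<le> real n1 \<and> n1 \<le> n - 1) (nat \<lceil>real n / 2\<rceil>)"
proof (rule unique_argmin_ceiling_half[OF assms(1)])
  fix m m' :: nat
  assume "real n / 2 \<le> real m" "m < m'" "m' \<le> n - 1"
  moreover have "0 < (4 * real p + 3 * \<theta>) * \<sigma>^4"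
    using assms by simp
  ultimately show "g_general n p \<theta> \<sigma> \<mu>4 m < g_general n p \<theta> \<sigma> \<mu>4 m'"
    unfolding g_general_def using assms
    by (intro less_sum_inverse_upper_half) auto
qed

lemma V_k_eq_cubic:
  assumes "2 \<le> k" "2 \<le> n"
  shows "V_k n p \<theta> \<sigma> k = \<sigma>^4 * (2 / real n
     + ((4 * real p + 3 * \<theta>) / (real n)^2 - \<theta> / (real n * (real n - 1))) * (real k / (real k - 1))
     + real p / (real n)^2 * (real k / (real k - 1))^2
     + 2 * (real p - \<theta>) / (real n * (real n - 1)) * (real k / (real k - 1))^3)"
proof -
  have "real k - 1 \<noteq> 0" "real n - 1 \<noteq> 0"
    using assms by auto
  then show ?thesis
    using assms unfolding V_k_def v_k_def c_k_def
    by (simp add: divide_simps) algebra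
qed

lemma cubic_strict_mono_on_pos:
  fixes b c d u v :: real
  assumes "0 < b" "0 \<le> c" "0 \<le> d" "0 < u" "u < v"
  shows "b * u + c * u^2 + d * u^3 < b * v + c * v^2 + d * v^3"
proof -
  have "c * u^2 \<le> c * v^2" "d * u^3 \<le> d * v^3"
    using assms by (auto intro: mult_left_mono power_mono)
  moreover have "b * u < b * v"
    using assms by simp
  ultimately show ?thesis
    by linarith
qed

lemma divide_self_minus_one_strict_antimono:
  fixes k m :: real
  assumes "1 < k" "k < m"
  shows "m / (m - 1) < k / (k - 1)"
proof -
  have "1 / (m - 1) < 1 / (k - 1)"
    using assms by (intro frac_less2) auto
  moreover have "m / (m - 1) = 1 + 1 / (m - 1)" "k / (k - 1) = 1 + 1 / (k - 1)"
    using assms by (simp_all add: field_simps)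
  ultimately show ?thesis
    by simp
qed

lemma unique_argmin_V_k:
  assumes "2 \<le> n" "0 < p" "0 \<le> \<theta>" "\<theta> \<le> real p" "\<sigma> \<noteq> 0"
  shows "unique_argmin (V_k n p \<theta> \<sigma>) (\<lambda>k. 2 \<le> k \<and> k dvd n) n"
proof -
  define N where "N = real n"
  define B where "B = (4 * real p + 3 * \<theta>) / N^2 - \<theta> / (N * (N - 1))"
  define D where "D = 2 * (real p - \<theta>) / (N * (N - 1))"
  define F where "F u = B * u + real p / N^2 * u^2 + D * u^3" for u :: real
  have V: "V_k n p \<theta> \<sigma> k = \<sigma>^4 * (2 / N + F (real k / (real k - 1)))" if "2 \<le> k" for k
    using V_k_eq_cubic[OF that assms(1)] by (simp add: F_def B_def D_def N_def)
  have "N \<ge> 2"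
    using assms(1) by (simp add: N_def)
  have "3 * \<theta> \<le> N * (2 * \<theta>)"
    using mult_right_mono[OF \<open>N \<ge> 2\<close>, of "2 * \<theta>"] assms(3) by linarith
  then have "\<theta> / (N * (N - 1)) \<le> 3 * \<theta> / N^2"
    using \<open>N \<ge> 2\<close> by (simp add: field_simps power2_eq_square)
  moreover have "0 < 4 * real p / N^2"
    using \<open>N \<ge> 2\<close> assms(2) by simp
  ultimately have "0 < B"
    by (simp add: B_def add_divide_distrib)
  moreover have "0 \<le> D"
    using \<open>N \<ge> 2\<close> assms(4) by (simp add: D_def)
  ultimately have F_less: "F u < F v" if "0 < u" "u < v" for u v
    unfolding F_def using that by (intro cubic_strict_mono_on_pos) auto
  have "V_k n p \<theta> \<sigma> n < V_k n p \<theta> \<sigma> k" if "2 \<le> k" "k dvd n" "k \<noteq> n" for k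
  proof -
    have "real k < N"
      using that assms(1) dvd_imp_le[of k n] by (simp add: N_def)
    then have "N / (N - 1) < real k / (real k - 1)"
      using that by (intro divide_self_minus_one_strict_antimono) auto
    with \<open>N \<ge> 2\<close> have "F (N / (N - 1)) < F (real k / (real k - 1))"
      by (intro F_less) auto
    then show ?thesis
      using V[OF that(1)] V[OF assms(1)] assms(5) by (simp add: N_def)
  qed
  then show ?thesis
    unfolding unique_argmin_def using assms(1) by auto
qed

lemma (in finite_measure) integrable_power_if_integrable_abs_powr:
  fixes f :: "'a \<Rightarrow> real"
  assumes "f \<in> borel_measurable M" "integrable M (\<lambda>x. \<bar>f x\<bar> powr q)" "real k \<le> q"
  shows "integrable M (\<lambda>x. f x ^ k)"
proof (rule Bochner_Integration.integrable_bound)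
  show "integrable M (\<lambda>x. 1 + \<bar>f x\<bar> powr q)"
    using assms(2) by simp
  show "AE x in M. norm (f x ^ k) \<le> norm (1 + \<bar>f x\<bar> powr q)"
  proof (intro AE_I2)
    fix x
    have "\<bar>f x\<bar> ^ k \<le> 1 + \<bar>f x\<bar> powr q"
    proof (cases "\<bar>f x\<bar> \<le> 1")
      case True
      then have "\<bar>f x\<bar> ^ k \<le> 1"
        by (simp add: power_le_one)
      then show ?thesis
        by (smt (verit) powr_ge_zero)
    next
      case False
      then have "\<bar>f x\<bar> ^ k = \<bar>f x\<bar> powr real k"
        by (simp add: powr_realpow)
      also have "\<dots> \<le> \<bar>f x\<bar> powr q"
        using False assms(3) by (intro powr_mono) auto
      finally show ?thesis
        by simp
    qed
    then show "norm (f x ^ k) \<le> norm (1 + \<bar>f x\<bar> powr q)"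
      by (simp add: power_abs)
  qed
qed (use assms(1) in simp)

lemma (in prob_space) square_expectation_le:
  fixes X :: "'a \<Rightarrow> real"
  assumes "integrable M X" "integrable M (\<lambda>x. X x ^ 2)"
  shows "expectation X ^ 2 \<le> expectation (\<lambda>x. X x ^ 2)"
  using variance_eq[OF assms] variance_positive[of X] by simp

lemma (in prob_space) square_second_moment_le_fourth_moment:
  fixes e :: "'a \<Rightarrow> real"
  assumes "e \<in> borel_measurable M" "integrable M (\<lambda>x. \<bar>e x\<bar> powr q)" "4 \<le> q"
  shows "(LINT x|M. (e x)^2)^2 \<le> (LINT x|M. (e x)^4)"
proof -
  have "integrable M (\<lambda>x. (e x)^2)" "integrable M (\<lambda>x. (e x)^4)"
    using assms by (auto intro: integrable_power_if_integrable_abs_powr)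
  then show ?thesis
    using square_expectation_le[of "\<lambda>x. (e x)^2"] by (simp add: power_mult[symmetric])
qed

theorem proposition6:
  fixes X :: "real^'p^'n"
  defines "n \<equiv> CARD('n)" and "p \<equiv> CARD('p)"
  assumes n_ge2: "n \<ge> 2"
    and ones: "\<exists>j. \<forall>i. X $ i $ j = 1"
    and full_rank: "rank X = p"
  shows
    "(\<forall>(M :: 'a measure) e \<sigma>. prob_space M \<and> \<sigma> > 0 \<and>
        distributed M lborel e (normal_density 0 \<sigma>) \<longrightarrow>
        unique_argmin (g_normal n p (theta X) \<sigma>)
          (\<lambda>n1. real n / 2 \<le> real n1 \<and> n1 \<le> n - 1) (nat \<lceil>real n / 2\<rceil>)
      \<and> unique_argmin (V_k n p (theta X) \<sigma>)
          (\<lambda>k. k \<ge> 2 \<and> k dvd n) n)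
   \<and> (\<forall>(M :: 'a measure) e \<sigma> \<epsilon>. prob_space M \<and> e \<in> borel_measurable M \<and> \<sigma> > 0 \<and> \<epsilon> > 0 \<and>
        integrable M (\<lambda>x. \<bar>e x\<bar> powr (4 + \<epsilon>)) \<and>
        (LINT x|M. e x) = 0 \<and> (LINT x|M. (e x)^2) = \<sigma>^2 \<longrightarrow>
        unique_argmin (g_general n p (theta X) \<sigma> (LINT x|M. (e x)^4))
          (\<lambda>n1. real n / 2 \<le> real n1 \<and> n1 \<le> n - 1) (nat \<lceil>real n / 2\<rceil>))"
proof -
  \<comment> \<open>The error law enters only through \<mu>4 \<ge> \<sigma>^4.\<close>
  have "0 < p"
    by (simp add: p_def)
  moreover have "0 \<le> theta X" "theta X \<le> real p"
    using theta_nonneg theta_le_card full_rank by (auto simp: p_def)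
  ultimately have pos: "0 < 4 * real p + 3 * theta X"
    by simp
  have normal: "unique_argmin (g_normal n p (theta X) \<sigma>)
      (\<lambda>n1. real n / 2 \<le> real n1 \<and> n1 \<le> n - 1) (nat \<lceil>real n / 2\<rceil>)
    \<and> unique_argmin (V_k n p (theta X) \<sigma>) (\<lambda>k. k \<ge> 2 \<and> k dvd n) n"
    if "0 < \<sigma>" for \<sigma> :: real
    using that unique_argmin_g_general[OF n_ge2 _ _ pos, of \<sigma> "3 * \<sigma>^4"]
      unique_argmin_V_k[OF n_ge2 \<open>0 < p\<close> \<open>0 \<le> theta X\<close> \<open>theta X \<le> real p\<close>, of \<sigma>]
    by (simp add: g_normal_eq_g_general)
  have general: "unique_argmin (g_general n p (theta X) \<sigma> (LINT x|M. (e x)^4))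
      (\<lambda>n1. real n / 2 \<le> real n1 \<and> n1 \<le> n - 1) (nat \<lceil>real n / 2\<rceil>)"
    if "prob_space M" "e \<in> borel_measurable M" "0 < \<sigma>" "0 < \<epsilon>"
      "integrable M (\<lambda>x. \<bar>e x\<bar> powr (4 + \<epsilon>))" "(LINT x|M. (e x)^2) = \<sigma>^2"
    for M :: "'a measure" and e and \<sigma> \<epsilon> :: real
  proof (rule unique_argmin_g_general[OF n_ge2 _ _ pos])
    show "\<sigma>^4 \<le> (LINT x|M. (e x)^4)"
      using prob_space.square_second_moment_le_fourth_moment[of M e "4 + \<epsilon>"] that
      by (simp add: power_mult[symmetric])
  qed (use that in simp)
  show ?thesis
    using normal general by blast
qed

end
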